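(* Let $\mathcal C$ be an $(n,k,r,t)$-SLRC and let $G$ be a minimal repair graph of $\mathcal C$ with source set $S(G)$. Then for every $E\subseteq[n]$ with $|E|\le t$, $$|\mathrm{Out}(E)|\ge|E\cap S(G)|.$$
   Context: For an $[n,k]$ linear code $\mathcal C$ over a finite field $\mathbb F$, a recovering set of $i\in[n]$ is a set $R\subseteq[n]\setminus\{i\}$ with nonzero $a_j\in\mathbb F$ such that $x_i=\sum_{j\in R}a_jx_j$ for all $x\in\mathcal C$; standing assumption: recovering sets have size $2\le|R|\le r<k$. $\mathcal C$ is an $(n,k,r,t)$-SLRC if every $E\subseteq[n]$ with $|E|\le t$ can be indexed $\{i_1,\dots,i_{|E|}\}$ so that each $i_\ell$ has a recovering set $R_\ell\subseteq([n]\setminus E)\cup\{i_1,\dots,i_{\ell-1}\}$. A repair graph of $\mathcal C$ is a directed acyclic graph on vertex set $[n]$ such that for every vertex $i$ with nonempty in-neighbourhood $\mathrm{In}(i)$, $\mathrm{In}(i)$ is a recovering set of $i$. A source is a vertex with no in-neighbours; $S(G)$ is the set of sources. A minimal repair graph is a repair graph whose number of sources is minimum among all repair graphs of $\mathcal C$. $\mathrm{Out}(v)$ is the set of out-neighbours of $v$, and for $E\subseteq[n]$, $\mathrm{Out}(E)=\bigcup_{v\in E}\mathrm{Out}(v)\setminus E$. *)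

theory Defs
  imports Complex_Main "HOL-Library.Function_Algebras"
begin

text \<open>Ambient space F^n: functions nat => F supported on the index set [n] = {1..n}.\<close>

definition fscale :: "'a::field \<Rightarrow> (nat \<Rightarrow> 'a) \<Rightarrow> (nat \<Rightarrow> 'a)" where
  "fscale c x = (\<lambda>i. c * x i)"

definition ambient :: "nat \<Rightarrow> (nat \<Rightarrow> 'a::zero) set" where
  "ambient n = {x. \<forall>i. i \<notin> {1..n} \<longrightarrow> x i = 0}"

definition linear_code :: "nat \<Rightarrow> nat \<Rightarrow> (nat \<Rightarrow> 'a::{field,finite}) set \<Rightarrow> bool" where
  "linear_code n k C \<longleftrightarrow> C \<subseteq> ambient n \<and> module.subspace fscale C \<and> vector_space.dim fscale C = k"

definition recovering_set ::
  "nat \<Rightarrow> nat \<Rightarrow> (nat \<Rightarrow> 'a::{field,finite}) set \<Rightarrow> nat \<Rightarrow> nat set \<Rightarrow> bool" where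
  "recovering_set n r C i R \<longleftrightarrow>
     R \<subseteq> {1..n} - {i} \<and> 2 \<le> card R \<and> card R \<le> r \<and>
     (\<exists>a. (\<forall>j\<in>R. a j \<noteq> 0) \<and> (\<forall>x\<in>C. x i = (\<Sum>j\<in>R. a j * x j)))"

definition SLRC :: "nat \<Rightarrow> nat \<Rightarrow> nat \<Rightarrow> nat \<Rightarrow> (nat \<Rightarrow> 'a::{field,finite}) set \<Rightarrow> bool" where
  "SLRC n k r t C \<longleftrightarrow> linear_code n k C \<and> r < k \<and>
     (\<forall>E. E \<subseteq> {1..n} \<and> card E \<le> t \<longrightarrow>
        (\<exists>es. distinct es \<and> set es = E \<and>
           (\<forall>l < length es. \<exists>R. recovering_set n r C (es ! l) R \<and>
                R \<subseteq> ({1..n} - E) \<union> set (take l es))))"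

text \<open>Digraphs on [n] are edge relations; (u,v) is an edge u -> v.\<close>
definition In_nb :: "(nat \<times> nat) set \<Rightarrow> nat \<Rightarrow> nat set" where
  "In_nb G v = {u. (u, v) \<in> G}"

definition Out_nb :: "(nat \<times> nat) set \<Rightarrow> nat \<Rightarrow> nat set" where
  "Out_nb G v = {w. (v, w) \<in> G}"

definition Out_set :: "(nat \<times> nat) set \<Rightarrow> nat set \<Rightarrow> nat set" where
  "Out_set G E = (\<Union>v\<in>E. Out_nb G v) - E"

definition repair_graph ::
  "nat \<Rightarrow> nat \<Rightarrow> (nat \<Rightarrow> 'a::{field,finite}) set \<Rightarrow> (nat \<times> nat) set \<Rightarrow> bool" where
  "repair_graph n r C G \<longleftrightarrow> G \<subseteq> {1..n} \<times> {1..n} \<and> acyclic G \<and>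
     (\<forall>i\<in>{1..n}. In_nb G i \<noteq> {} \<longrightarrow> recovering_set n r C i (In_nb G i))"

definition sources :: "nat \<Rightarrow> (nat \<times> nat) set \<Rightarrow> nat set" where
  "sources n G = {i\<in>{1..n}. In_nb G i = {}}"

definition minimal_repair_graph ::
  "nat \<Rightarrow> nat \<Rightarrow> (nat \<Rightarrow> 'a::{field,finite}) set \<Rightarrow> (nat \<times> nat) set \<Rightarrow> bool" where
  "minimal_repair_graph n r C G \<longleftrightarrow> repair_graph n r C G \<and>
     (\<forall>G'. repair_graph n r C G' \<longrightarrow> card (sources n G) \<le> card (sources n G'))"

end

theory Submission
  imports Defs
begin

text \<open>Order \<open>E\<close> as \<open>e\<^sub>1, \<dots>, e\<^sub>m\<close> so that each \<open>e\<^sub>l\<close> has a recovering set \<open>R\<^sub>l\<close> inside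
  \<open>([n] - E) \<union> {e\<^sub>1, \<dots>, e\<^bsub>l-1\<^esub>}\<close>, as the SLRC property allows. Remove from \<open>G\<close> every edge
  ending in \<open>E \<union> Out(E)\<close> and let each \<open>e\<^sub>l\<close> receive edges from \<open>R\<^sub>l\<close> instead. The result is
  again a repair graph: a cycle avoiding \<open>E\<close> would already lie in \<open>G\<close>, and along a cycle through
  \<open>E\<close> the position in the recovery order would strictly increase. Its sources lie in
  \<open>(S(G) - E) \<union> Out(E)\<close>, so minimality of \<open>G\<close> gives \<open>|S(G)| \<le> |S(G) - E| + |Out(E)|\<close>.\<close>

lemma acyclic_Un_layered:
  fixes f :: "'a \<Rightarrow> 'b::order"
  assumes "acyclic A" and "A \<subseteq> (- E) \<times> (- E)" and "B \<subseteq> UNIV \<times> E"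
    and rank: "\<And>u v. (u, v) \<in> B \<Longrightarrow> u \<in> E \<Longrightarrow> f u < f v"
  shows "acyclic (A \<union> B)"
proof (rule acyclicI, intro allI notI)
  fix x assume cycle: "(x, x) \<in> (A \<union> B)\<^sup>+"
  have rank_increases: "y \<in> E \<and> f x < f y" if "(x, y) \<in> (A \<union> B)\<^sup>+" "x \<in> E" for x y
    using that(1)
  proof (induction rule: trancl_induct)
    case (base y)
    then show ?case using that(2) assms(2,3) rank by blast
  next
    case (step y z)
    then have "(y, z) \<in> B" using assms(2) by blast
    then show ?case using step assms(3) rank by (meson less_trans subsetD SigmaD2)
  qed
  have stays_in_A: "(x, y) \<in> A\<^sup>+" if "(x, y) \<in> (A \<union> B)\<^sup>+" "y \<notin> E" for x y
    using that
  proof (induction rule: trancl_induct)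
    case (base y)
    then show ?case using assms(3) by blast
  next
    case (step y z)
    then have "(y, z) \<in> A" using assms(3) by blast
    with step show ?case using assms(2) by (blast intro: trancl_into_trancl)
  qed
  show False
  proof (cases "x \<in> E")
    case True
    then show False using rank_increases[OF cycle] by simp
  next
    case False
    then show False using stays_in_A[OF cycle] \<open>acyclic A\<close> unfolding acyclic_def by blast
  qed
qed

definition reroute ::
  "(nat \<times> nat) set \<Rightarrow> nat set \<Rightarrow> nat list \<Rightarrow> (nat \<Rightarrow> nat set) \<Rightarrow> (nat \<times> nat) set" where
  "reroute G E es R =
     {(u, v) \<in> G. v \<notin> E \<and> v \<notin> Out_set G E} \<union> {(u, es ! l) | u l. l < length es \<and> u \<in> R l}"

lemma In_nb_reroute_nth:
  assumes "distinct es" and "set es = E" and "l < length es"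
  shows "In_nb (reroute G E es R) (es ! l) = R l"
proof -
  have "(u, es ! l) \<in> reroute G E es R \<longleftrightarrow> u \<in> R l" for u
    using assms nth_eq_iff_index_eq[OF assms(1)] by (auto simp: reroute_def)
  then show ?thesis by (auto simp: In_nb_def)
qed

lemma In_nb_reroute_outside:
  assumes "set es = E" and "v \<notin> E"
  shows "In_nb (reroute G E es R) v = (if v \<in> Out_set G E then {} else In_nb G v)"
  using assms by (auto simp: In_nb_def reroute_def)

lemma acyclic_reroute:
  assumes "acyclic G" and "distinct es" and "set es = E"
    and earlier: "\<And>l. l < length es \<Longrightarrow> R l \<subseteq> (- E) \<union> set (take l es)"
  shows "acyclic (reroute G E es R)"
proof -
  define rank where "rank = the_inv_into {..<length es} (nth es)"
  have rank_nth: "rank (es ! j) = j" if "j < length es" for j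
    unfolding rank_def using that by (intro the_inv_into_f_f inj_on_nth) (auto simp: assms(2))
  show ?thesis
    unfolding reroute_def
  proof (rule acyclic_Un_layered[where f = rank])
    show "acyclic {(u, v) \<in> G. v \<notin> E \<and> v \<notin> Out_set G E}"
      using \<open>acyclic G\<close> by (rule acyclic_subset) auto
    show "{(u, v) \<in> G. v \<notin> E \<and> v \<notin> Out_set G E} \<subseteq> (- E) \<times> (- E)"
      by (auto simp: Out_set_def Out_nb_def)
    show "{(u, es ! l) | u l. l < length es \<and> u \<in> R l} \<subseteq> UNIV \<times> E"
      using assms(3) by auto
  next
    fix u v assume "(u, v) \<in> {(u, es ! l) | u l. l < length es \<and> u \<in> R l}" and "u \<in> E"
    then obtain l where l: "l < length es" "u \<in> R l" "v = es ! l" by auto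
    with earlier[OF l(1)] \<open>u \<in> E\<close> have "u \<in> set (take l es)" by blast
    then obtain j where "j < l" "u = es ! j"
      using l(1) by (auto simp: in_set_conv_nth)
    with l show "rank u < rank v" using rank_nth by simp
  qed
qed

lemma repair_graph_reroute:
  assumes "repair_graph n r C G" and "E \<subseteq> {1..n}" and "distinct es" and "set es = E"
    and recovers: "\<And>l. l < length es \<Longrightarrow>
      recovering_set n r C (es ! l) (R l) \<and> R l \<subseteq> ({1..n} - E) \<union> set (take l es)"
  shows "repair_graph n r C (reroute G E es R)"
  unfolding repair_graph_def
proof (intro conjI ballI impI)
  have R_range: "R l \<subseteq> {1..n}" if "l < length es" for l
    using recovers[OF that] by (auto simp: recovering_set_def)
  show "reroute G E es R \<subseteq> {1..n} \<times> {1..n}"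
    using assms(1,2,4) R_range by (fastforce simp: reroute_def repair_graph_def)
  show "acyclic (reroute G E es R)"
    using assms(1,3,4) recovers by (intro acyclic_reroute) (auto simp: repair_graph_def)
next
  fix i assume i: "i \<in> {1..n}" "In_nb (reroute G E es R) i \<noteq> {}"
  show "recovering_set n r C i (In_nb (reroute G E es R) i)"
  proof (cases "i \<in> E")
    case True
    then obtain l where "l < length es" "i = es ! l"
      using assms(4) by (auto simp: in_set_conv_nth)
    then show ?thesis using In_nb_reroute_nth assms(3,4) recovers by auto
  next
    case False
    then show ?thesis
      using i assms(1,4) In_nb_reroute_outside[of es E i]
      by (auto simp: repair_graph_def split: if_splits)
  qed
qed

lemma sources_reroute_subset:
  assumes "distinct es" and "set es = E"
    and "\<And>l. l < length es \<Longrightarrow> R l \<noteq> {}"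
  shows "sources n (reroute G E es R) \<subseteq> (sources n G - E) \<union> Out_set G E"
proof
  fix v assume v: "v \<in> sources n (reroute G E es R)"
  show "v \<in> (sources n G - E) \<union> Out_set G E"
  proof (cases "v \<in> E")
    case True
    then obtain l where "l < length es" "v = es ! l"
      using assms(2) by (auto simp: in_set_conv_nth)
    then show ?thesis
      using v assms In_nb_reroute_nth by (auto simp: sources_def)
  next
    case False
    then show ?thesis
      using v assms(2) In_nb_reroute_outside[of es E v] by (auto simp: sources_def split: if_splits)
  qed
qed

lemma SLRC_recovery_order:
  assumes "SLRC n k r t C" and "E \<subseteq> {1..n}" and "card E \<le> t"
  obtains es R where "distinct es" and "set es = E"
    and "\<And>l. l < length es \<Longrightarrow>
      recovering_set n r C (es ! l) (R l) \<and> R l \<subseteq> ({1..n} - E) \<union> set (take l es)"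
proof -
  from assms obtain es where "distinct es" "set es = E"
    and "\<forall>l < length es. \<exists>R. recovering_set n r C (es ! l) R \<and>
           R \<subseteq> ({1..n} - E) \<union> set (take l es)"
    unfolding SLRC_def by blast
  then show thesis using that by metis
qed

lemma finite_Out_set:
  assumes "G \<subseteq> {1..n} \<times> {1..n}"
  shows "finite (Out_set G E)"
proof (rule finite_subset)
  show "Out_set G E \<subseteq> {1..n}"
    using assms by (auto simp: Out_set_def Out_nb_def)
qed simp

theorem lemma5:
  fixes C :: "(nat \<Rightarrow> 'a::{field,finite}) set"
    and G :: "(nat \<times> nat) set"
  assumes "SLRC n k r t C"
    and "minimal_repair_graph n r C G"
    and "E \<subseteq> {1..n}" and "card E \<le> t"
  shows "card (Out_set G E) \<ge> card (E \<inter> sources n G)"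
proof -
  obtain es R where es: "distinct es" "set es = E"
    and recovers: "\<And>l. l < length es \<Longrightarrow>
      recovering_set n r C (es ! l) (R l) \<and> R l \<subseteq> ({1..n} - E) \<union> set (take l es)"
    using SLRC_recovery_order[OF assms(1,3,4)] by blast
  have G: "repair_graph n r C G"
    and minimal: "\<And>G'. repair_graph n r C G' \<Longrightarrow> card (sources n G) \<le> card (sources n G')"
    using assms(2) by (auto simp: minimal_repair_graph_def)
  have R_nonempty: "R l \<noteq> {}" if "l < length es" for l
    using recovers[OF that] by (auto simp: recovering_set_def)
  have finite_sources: "finite (sources n G)"
    by (simp add: sources_def)
  have "card (E \<inter> sources n G) + card (sources n G - E) = card (sources n G)"
    using card_Int_Diff[OF finite_sources, of E] by (simp add: Int_commute)
  also have "\<dots> \<le> card (sources n (reroute G E es R))"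
    using minimal repair_graph_reroute[OF G assms(3) es recovers] by blast
  also have "\<dots> \<le> card ((sources n G - E) \<union> Out_set G E)"
    using sources_reroute_subset[OF es R_nonempty] finite_sources
      finite_Out_set[of G n E] G by (intro card_mono) (auto simp: repair_graph_def)
  also have "\<dots> \<le> card (sources n G - E) + card (Out_set G E)"
    by (rule card_Un_le)
  finally show ?thesis by simp
qed

end
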